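(* Let $P,Q\in\Gamma_n$ and $0<r\le R$ with $r\le p_i/q_i\le R$ for all $i$. Let $s,t\in\mathbb{R}$ with $0\le s\le4$ and $t\ge-1$. Then $$r^{t+1}\Big(\frac{r+1}{2}\Big)^{s-t-1}(sr+4-s)\,\Omega_t(P\|Q)\le\zeta_s(P\|Q)\le R^{t+1}\Big(\frac{R+1}{2}\Big)^{s-t-1}(sR+4-s)\,\Omega_t(P\|Q).$$
   Context: $\Gamma_n=\{P=(p_1,\dots,p_n): p_i>0,\ \sum_i p_i=1\}$, $n\ge2$. For $P,Q\in\Gamma_n$ and $s\in\mathbb{R}$: $\Omega_s(P\|Q)=[s(s-1)]^{-1}\big[\sum_i p_i\big(\frac{p_i+q_i}{2p_i}\big)^s-1\big]$ for $s\ne0,1$; $\Omega_0(P\|Q)=\sum_i p_i\ln\frac{2p_i}{p_i+q_i}$; $\Omega_1(P\|Q)=\sum_i\frac{p_i+q_i}{2}\ln\frac{p_i+q_i}{2p_i}$. $\zeta_s(P\|Q)=(s-1)^{-1}\sum_i(p_i-q_i)\big(\frac{p_i+q_i}{2q_i}\big)^{s-1}$ for $s\ne1$; $\zeta_1(P\|Q)=\sum_i(p_i-q_i)\ln\frac{p_i+q_i}{2q_i}$. *)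

theory Defs
  imports Complex_Main
begin

definition Gamma :: "nat \<Rightarrow> (nat \<Rightarrow> real) set" where
  "Gamma n = {p. (\<forall>i<n. p i > 0) \<and> (\<Sum>i<n. p i) = 1}"

definition Omega :: "nat \<Rightarrow> real \<Rightarrow> (nat \<Rightarrow> real) \<Rightarrow> (nat \<Rightarrow> real) \<Rightarrow> real" where
  "Omega n s p q =
    (if s = 0 then (\<Sum>i<n. p i * ln (2 * p i / (p i + q i)))
     else if s = 1 then (\<Sum>i<n. (p i + q i) / 2 * ln ((p i + q i) / (2 * p i)))
     else ((\<Sum>i<n. p i * ((p i + q i) / (2 * p i)) powr s) - 1) / (s * (s - 1)))"

definition zeta :: "nat \<Rightarrow> real \<Rightarrow> (nat \<Rightarrow> real) \<Rightarrow> (nat \<Rightarrow> real) \<Rightarrow> real" where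
  "zeta n s p q =
    (if s = 1 then (\<Sum>i<n. (p i - q i) * ln ((p i + q i) / (2 * q i)))
     else (\<Sum>i<n. (p i - q i) * ((p i + q i) / (2 * q i)) powr (s - 1)) / (s - 1))"

end

theory Submission
  imports Defs "HOL-Analysis.Convex"
begin

(* Both divergences are Csiszar divergences sum_i q_i f(p_i/q_i) whose generators f vanish at 1,
   and on (0, infinity) the second derivative of the zeta generator is curvature_ratio s t x times
   that of the Omega generator.  For 0 <= s <= 4 and t >= -1 this ratio is nondecreasing in x, so
   with rho = curvature_ratio s t the differences f_zeta - rho r * f_Omega and
   rho R * f_Omega - f_zeta are convex on [r, R] and vanish at 1.  Jensen's inequality with weights
   q_i, whose mean sum_i q_i (p_i/q_i) is 1, makes their Csiszar divergences nonnegative. *)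

section \<open>Csiszar divergences\<close>

definition csiszar_divergence ::
    "nat \<Rightarrow> (real \<Rightarrow> real) \<Rightarrow> (nat \<Rightarrow> real) \<Rightarrow> (nat \<Rightarrow> real) \<Rightarrow> real" where
  "csiszar_divergence n f p q = (\<Sum>i<n. q i * f (p i / q i))"

lemma csiszar_divergence_cmult:
  "csiszar_divergence n (\<lambda>x. c * f x) p q = c * csiszar_divergence n f p q"
  by (simp add: csiszar_divergence_def sum_distrib_left ac_simps)

lemma csiszar_divergence_diff:
  "csiszar_divergence n (\<lambda>x. f x - g x) p q
     = csiszar_divergence n f p q - csiszar_divergence n g p q"
  by (simp add: csiszar_divergence_def right_diff_distrib sum_subtractf)

lemma csiszar_divergence_nonneg:
  assumes "convex_on C f" and "f 1 = 0" and "p \<in> Gamma n" and "q \<in> Gamma n"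
    and "\<And>i. i < n \<Longrightarrow> p i / q i \<in> C"
  shows "0 \<le> csiszar_divergence n f p q"
proof -
  have q_pos: "\<And>i. i < n \<Longrightarrow> 0 < q i" and q_sum: "(\<Sum>i<n. q i) = 1"
    using \<open>q \<in> Gamma n\<close> by (auto simp: Gamma_def)
  have "{..<n} \<noteq> {}"
    using q_sum by auto
  have "(\<Sum>i<n. q i *\<^sub>R (p i / q i)) = (\<Sum>i<n. p i)"
    using order_less_imp_not_eq2[OF q_pos] by (intro sum.cong) auto
  also have "\<dots> = 1"
    using \<open>p \<in> Gamma n\<close> by (simp add: Gamma_def)
  finally have "f (\<Sum>i<n. q i *\<^sub>R (p i / q i)) = 0"
    using \<open>f 1 = 0\<close> by simp
  moreover have "f (\<Sum>i<n. q i *\<^sub>R (p i / q i)) \<le> (\<Sum>i<n. q i * f (p i / q i))"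
    using \<open>{..<n} \<noteq> {}\<close> assms(1,5) q_sum q_pos
    by (intro convex_on_sum) (auto intro: less_imp_le)
  ultimately show ?thesis
    by (simp add: csiszar_divergence_def)
qed

section \<open>Second derivatives and convexity\<close>

definition second_derivative_on :: "(real \<Rightarrow> real) \<Rightarrow> (real \<Rightarrow> real) \<Rightarrow> real set \<Rightarrow> bool" where
  "second_derivative_on f f'' S \<longleftrightarrow>
     (\<exists>f'. \<forall>x\<in>S. (f has_real_derivative f' x) (at x) \<and> (f' has_real_derivative f'' x) (at x))"

lemma second_derivative_onI:
  assumes "\<And>x. x \<in> S \<Longrightarrow> (f has_real_derivative f' x) (at x)"
    and "\<And>x. x \<in> S \<Longrightarrow> (f' has_real_derivative f'' x) (at x)"
  shows "second_derivative_on f f'' S"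
  using assms unfolding second_derivative_on_def by blast

lemma second_derivative_on_subset:
  "second_derivative_on f f'' T \<Longrightarrow> S \<subseteq> T \<Longrightarrow> second_derivative_on f f'' S"
  unfolding second_derivative_on_def by blast

lemma second_derivative_on_cong:
  assumes "second_derivative_on f f'' S" and "\<And>x. x \<in> S \<Longrightarrow> f'' x = g'' x"
  shows "second_derivative_on f g'' S"
  using assms unfolding second_derivative_on_def by metis

lemma second_derivative_on_const: "second_derivative_on (\<lambda>x. c) (\<lambda>x. 0) S"
  by (rule second_derivative_onI[where f' = "\<lambda>x. 0"]) auto

lemma second_derivative_on_cmult:
  assumes "second_derivative_on f f'' S"
  shows "second_derivative_on (\<lambda>x. c * f x) (\<lambda>x. c * f'' x) S"
proof -
  obtain f' where "\<forall>x\<in>S. (f has_real_derivative f' x) (at x) \<and> (f' has_real_derivative f'' x) (at x)"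
    using assms unfolding second_derivative_on_def by blast
  then show ?thesis
    by (intro second_derivative_onI[where f' = "\<lambda>x. c * f' x"] DERIV_cmult) auto
qed

lemma second_derivative_on_diff:
  assumes "second_derivative_on f f'' S" and "second_derivative_on g g'' S"
  shows "second_derivative_on (\<lambda>x. f x - g x) (\<lambda>x. f'' x - g'' x) S"
proof -
  obtain f' where "\<forall>x\<in>S. (f has_real_derivative f' x) (at x) \<and> (f' has_real_derivative f'' x) (at x)"
    using assms(1) unfolding second_derivative_on_def by blast
  moreover obtain g' where "\<forall>x\<in>S. (g has_real_derivative g' x) (at x) \<and> (g' has_real_derivative g'' x) (at x)"
    using assms(2) unfolding second_derivative_on_def by blast
  ultimately show ?thesis
    by (intro second_derivative_onI[where f' = "\<lambda>x. f' x - g' x"] DERIV_diff) auto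
qed

lemma convex_on_second_derivative_nonneg:
  assumes "convex S" and "second_derivative_on f f'' S" and "\<And>x. x \<in> S \<Longrightarrow> 0 \<le> f'' x"
  shows "convex_on S f"
proof -
  obtain f' where "\<forall>x\<in>S. (f has_real_derivative f' x) (at x) \<and> (f' has_real_derivative f'' x) (at x)"
    using assms(2) unfolding second_derivative_on_def by blast
  then show ?thesis
    using assms(1,3) by (intro f''_ge0_imp_convex[where f' = f' and f'' = f'']) auto
qed

lemma csiszar_divergence_mono:
  assumes "convex C" and "second_derivative_on f f'' C" and "second_derivative_on g g'' C"
    and "\<And>x. x \<in> C \<Longrightarrow> f'' x \<le> g'' x" and "f 1 = g 1"
    and "p \<in> Gamma n" and "q \<in> Gamma n" and "\<And>i. i < n \<Longrightarrow> p i / q i \<in> C"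
  shows "csiszar_divergence n f p q \<le> csiszar_divergence n g p q"
proof -
  have "convex_on C (\<lambda>x. g x - f x)"
    using assms(1-4) by (intro convex_on_second_derivative_nonneg[where f'' = "\<lambda>x. g'' x - f'' x"]
        second_derivative_on_diff) auto
  then have "0 \<le> csiszar_divergence n (\<lambda>x. g x - f x) p q"
    using assms(5-8) by (intro csiszar_divergence_nonneg) auto
  then show ?thesis
    by (simp add: csiszar_divergence_diff)
qed

lemma second_derivative_on_x_ln_ratio:
  "second_derivative_on (\<lambda>x. x * ln (2 * x / (x + 1))) (\<lambda>x. 1 / (x * (x + 1)^2)) {0<..}"
proof (rule second_derivative_onI)
  fix x :: real assume "x \<in> {0<..}"
  then have x: "0 < x" by simp
  show "((\<lambda>x. x * ln (2 * x / (x + 1))) has_real_derivative ln (2 * x / (x + 1)) + 1 / (x + 1)) (at x)"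
    by (rule DERIV_cong, (insert x, auto intro!: derivative_eq_intros)[1])
      (insert x, simp add: divide_simps; algebra)
  show "((\<lambda>x. ln (2 * x / (x + 1)) + 1 / (x + 1)) has_real_derivative 1 / (x * (x + 1)^2)) (at x)"
    by (rule DERIV_cong, (insert x, auto intro!: derivative_eq_intros)[1])
      (insert x, simp add: divide_simps; algebra)
qed

lemma second_derivative_on_mean_ln_ratio:
  "second_derivative_on (\<lambda>x. (x + 1) / 2 * ln ((x + 1) / (2 * x))) (\<lambda>x. 1 / (2 * x^2 * (x + 1))) {0<..}"
proof (rule second_derivative_onI)
  fix x :: real assume "x \<in> {0<..}"
  then have x: "0 < x" by simp
  show "((\<lambda>x. (x + 1) / 2 * ln ((x + 1) / (2 * x))) has_real_derivative
      ln ((x + 1) / (2 * x)) / 2 - 1 / (2 * x)) (at x)"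
    by (rule DERIV_cong, (insert x, auto intro!: derivative_eq_intros)[1])
      (insert x, simp add: divide_simps; algebra)
  show "((\<lambda>x. ln ((x + 1) / (2 * x)) / 2 - 1 / (2 * x)) has_real_derivative 1 / (2 * x^2 * (x + 1))) (at x)"
    by (rule DERIV_cong, (insert x, auto intro!: derivative_eq_intros)[1])
      (insert x, simp add: divide_simps; algebra)
qed

lemma second_derivative_on_x_times_ratio_powr:
  "second_derivative_on (\<lambda>x. x * ((x + 1) / (2 * x)) powr a)
     (\<lambda>x. a * (a - 1) * ((x + 1) / (2 * x)) powr (a - 2) / (4 * x^3)) {0<..}"
proof (rule second_derivative_onI)
  fix x :: real assume "x \<in> {0<..}"
  then have x: "0 < x" by simp
  show "((\<lambda>x. x * ((x + 1) / (2 * x)) powr a) has_real_derivative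
      ((x + 1) / (2 * x)) powr a - a * ((x + 1) / (2 * x)) powr (a - 1) / (2 * x)) (at x)"
    using x by (auto intro!: derivative_eq_intros simp: field_simps power2_eq_square)
  show "((\<lambda>x. ((x + 1) / (2 * x)) powr a - a * ((x + 1) / (2 * x)) powr (a - 1) / (2 * x))
      has_real_derivative a * (a - 1) * ((x + 1) / (2 * x)) powr (a - 2) / (4 * x^3)) (at x)"
    using x by (auto intro!: derivative_eq_intros simp: field_simps power2_eq_square power3_eq_cube)
qed

lemma second_derivative_on_shifted_ln_mean:
  "second_derivative_on (\<lambda>x. (x - 1) * ln ((x + 1) / 2)) (\<lambda>x. (x + 3) / (x + 1)^2) {0<..}"
proof (rule second_derivative_onI)
  fix x :: real assume "x \<in> {0<..}"
  then have x: "0 < x" by simp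
  show "((\<lambda>x. (x - 1) * ln ((x + 1) / 2)) has_real_derivative ln ((x + 1) / 2) + (x - 1) / (x + 1)) (at x)"
    by (rule DERIV_cong, (insert x, auto intro!: derivative_eq_intros)[1])
      (insert x, simp add: divide_simps; algebra)
  show "((\<lambda>x. ln ((x + 1) / 2) + (x - 1) / (x + 1)) has_real_derivative (x + 3) / (x + 1)^2) (at x)"
    by (rule DERIV_cong, (insert x, auto intro!: derivative_eq_intros)[1])
      (insert x, simp add: divide_simps; algebra)
qed

lemma second_derivative_on_shifted_times_mean_powr:
  "second_derivative_on (\<lambda>x. (x - 1) * ((x + 1) / 2) powr a)
     (\<lambda>x. a * ((x + 1) / 2) powr (a - 1) + a * (a - 1) * (x - 1) * ((x + 1) / 2) powr (a - 2) / 4) {0<..}"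
proof (rule second_derivative_onI)
  fix x :: real assume "x \<in> {0<..}"
  then have x: "0 < x" by simp
  show "((\<lambda>x. (x - 1) * ((x + 1) / 2) powr a) has_real_derivative
      ((x + 1) / 2) powr a + a * (x - 1) * ((x + 1) / 2) powr (a - 1) / 2) (at x)"
    using x by (auto intro!: derivative_eq_intros simp: field_simps)
  show "((\<lambda>x. ((x + 1) / 2) powr a + a * (x - 1) * ((x + 1) / 2) powr (a - 1) / 2) has_real_derivative
      a * ((x + 1) / 2) powr (a - 1) + a * (a - 1) * (x - 1) * ((x + 1) / 2) powr (a - 2) / 4) (at x)"
    using x by (auto intro!: derivative_eq_intros simp: field_simps)
qed

section \<open>Omega and zeta as Csiszar divergences\<close>

definition Omega_generator :: "real \<Rightarrow> real \<Rightarrow> real" where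
  "Omega_generator t x =
    (if t = 0 then x * ln (2 * x / (x + 1))
     else if t = 1 then (x + 1) / 2 * ln ((x + 1) / (2 * x))
     else (x * ((x + 1) / (2 * x)) powr t - 1) / (t * (t - 1)))"

definition zeta_generator :: "real \<Rightarrow> real \<Rightarrow> real" where
  "zeta_generator s x =
    (if s = 1 then (x - 1) * ln ((x + 1) / 2)
     else (x - 1) * ((x + 1) / 2) powr (s - 1) / (s - 1))"

lemma Omega_generator_one [simp]: "Omega_generator t 1 = 0"
  by (simp add: Omega_generator_def)

lemma zeta_generator_one [simp]: "zeta_generator s 1 = 0"
  by (simp add: zeta_generator_def)

lemma Omega_generator_ratio:
  assumes "0 < a" and "0 < b"
  shows "b * Omega_generator t (a / b) =
    (if t = 0 then a * ln (2 * a / (a + b))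
     else if t = 1 then (a + b) / 2 * ln ((a + b) / (2 * a))
     else (a * ((a + b) / (2 * a)) powr t - b) / (t * (t - 1)))"
proof -
  define x where "x = a / b"
  have "b * x = a" "b * ((x + 1) / 2) = (a + b) / 2"
    "2 * x / (x + 1) = 2 * a / (a + b)" "(x + 1) / (2 * x) = (a + b) / (2 * a)"
    using assms by (simp_all add: x_def field_simps)
  then show ?thesis
    unfolding x_def[symmetric] Omega_generator_def
    by (simp add: mult.assoc[symmetric] right_diff_distrib)
qed

lemma zeta_generator_ratio:
  assumes "0 < b"
  shows "b * zeta_generator s (a / b) =
    (if s = 1 then (a - b) * ln ((a + b) / (2 * b))
     else (a - b) * ((a + b) / (2 * b)) powr (s - 1) / (s - 1))"
proof -
  define x where "x = a / b"
  have "b * (x - 1) = a - b" and mean: "(x + 1) / 2 = (a + b) / (2 * b)"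
    using assms by (simp_all add: x_def field_simps)
  then show ?thesis
    unfolding x_def[symmetric] zeta_generator_def mean
    by (simp add: mult.assoc[symmetric])
qed

lemma Omega_eq_csiszar_divergence:
  assumes "\<And>i. i < n \<Longrightarrow> 0 < p i" and "q \<in> Gamma n"
  shows "Omega n t p q = csiszar_divergence n (Omega_generator t) p q"
proof -
  have q_pos: "\<And>i. i < n \<Longrightarrow> 0 < q i" and q_sum: "(\<Sum>i<n. q i) = 1"
    using \<open>q \<in> Gamma n\<close> by (auto simp: Gamma_def)
  have "csiszar_divergence n (Omega_generator t) p q =
    (\<Sum>i<n. if t = 0 then p i * ln (2 * p i / (p i + q i))
       else if t = 1 then (p i + q i) / 2 * ln ((p i + q i) / (2 * p i))
       else (p i * ((p i + q i) / (2 * p i)) powr t - q i) / (t * (t - 1)))"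
    unfolding csiszar_divergence_def using assms(1) q_pos
    by (intro sum.cong refl Omega_generator_ratio) auto
  also have "\<dots> = Omega n t p q"
    using q_sum by (simp add: Omega_def sum_divide_distrib[symmetric] sum_subtractf)
  finally show ?thesis ..
qed

lemma zeta_eq_csiszar_divergence:
  assumes "\<And>i. i < n \<Longrightarrow> 0 < q i"
  shows "zeta n s p q = csiszar_divergence n (zeta_generator s) p q"
  unfolding csiszar_divergence_def zeta_def using assms
  by (simp add: zeta_generator_ratio sum_divide_distrib)

lemma Omega_generator_eq:
  assumes "t \<noteq> 0" and "t \<noteq> 1"
  shows "Omega_generator t =
    (\<lambda>x. 1 / (t * (t - 1)) * (x * ((x + 1) / (2 * x)) powr t) - 1 / (t * (t - 1)))"
  using assms by (simp add: Omega_generator_def fun_eq_iff diff_divide_distrib)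

lemma zeta_generator_eq:
  assumes "s \<noteq> 1"
  shows "zeta_generator s = (\<lambda>x. 1 / (s - 1) * ((x - 1) * ((x + 1) / 2) powr (s - 1)))"
  using assms by (simp add: zeta_generator_def fun_eq_iff)

definition Omega_curvature :: "real \<Rightarrow> real \<Rightarrow> real" where
  "Omega_curvature t x = ((x + 1) / (2 * x)) powr (t - 2) / (4 * x^3)"

definition zeta_curvature :: "real \<Rightarrow> real \<Rightarrow> real" where
  "zeta_curvature s x = ((x + 1) / 2) powr (s - 3) * (s * x + 4 - s) / 4"

lemma second_derivative_on_Omega_generator:
  "second_derivative_on (Omega_generator t) (Omega_curvature t) {0<..}"
proof -
  consider "t = 0" | "t = 1" | "t \<noteq> 0" "t \<noteq> 1" by blast
  then show ?thesis
  proof cases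
    case 1
    show ?thesis
    proof (rule second_derivative_on_cong)
      show "second_derivative_on (Omega_generator t) (\<lambda>x. 1 / (x * (x + 1)^2)) {0<..}"
        using 1 second_derivative_on_x_ln_ratio by (simp add: Omega_generator_def[abs_def])
      show "1 / (x * (x + 1)^2) = Omega_curvature t x" if "x \<in> {0<..}" for x
        using 1 that
        by (simp add: Omega_curvature_def powr_minus powr_realpow divide_simps power2_eq_square
            power3_eq_cube)
    qed
  next
    case 2
    show ?thesis
    proof (rule second_derivative_on_cong)
      show "second_derivative_on (Omega_generator t) (\<lambda>x. 1 / (2 * x^2 * (x + 1))) {0<..}"
        using 2 second_derivative_on_mean_ln_ratio by (simp add: Omega_generator_def[abs_def])
      show "1 / (2 * x^2 * (x + 1)) = Omega_curvature t x" if "x \<in> {0<..}" for x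
        using 2 that
        by (simp add: Omega_curvature_def powr_minus powr_realpow divide_simps power2_eq_square
            power3_eq_cube)
    qed
  next
    case 3
    show ?thesis
    proof (rule second_derivative_on_cong)
      show "second_derivative_on (Omega_generator t) (\<lambda>x. 1 / (t * (t - 1)) *
          (t * (t - 1) * ((x + 1) / (2 * x)) powr (t - 2) / (4 * x^3)) - 0) {0<..}"
        unfolding Omega_generator_eq[OF 3]
        by (rule second_derivative_on_diff[OF second_derivative_on_cmult
              [OF second_derivative_on_x_times_ratio_powr] second_derivative_on_const])
      have "1 / (t * (t - 1)) * (t * (t - 1)) = 1"
        using 3 by simp
      then show "1 / (t * (t - 1)) * (t * (t - 1) * ((x + 1) / (2 * x)) powr (t - 2) / (4 * x^3)) - 0
          = Omega_curvature t x" for x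
        unfolding Omega_curvature_def by (metis diff_zero mult.assoc mult_1 times_divide_eq_right)
    qed
  qed
qed

lemma second_derivative_on_zeta_generator:
  "second_derivative_on (zeta_generator s) (zeta_curvature s) {0<..}"
proof (cases "s = 1")
  case True
  show ?thesis
  proof (rule second_derivative_on_cong)
    show "second_derivative_on (zeta_generator s) (\<lambda>x. (x + 3) / (x + 1)^2) {0<..}"
      using True second_derivative_on_shifted_ln_mean by (simp add: zeta_generator_def[abs_def])
    show "(x + 3) / (x + 1)^2 = zeta_curvature s x" if "x \<in> {0<..}" for x
      using True that
      by (simp add: zeta_curvature_def powr_minus powr_realpow divide_simps power2_eq_square)
        (simp add: algebra_simps)
  qed
next
  case False
  show ?thesis
  proof (rule second_derivative_on_cong)
    show "second_derivative_on (zeta_generator s)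
        (\<lambda>x. 1 / (s - 1) * ((s - 1) * ((x + 1) / 2) powr (s - 1 - 1)
           + (s - 1) * (s - 1 - 1) * (x - 1) * ((x + 1) / 2) powr (s - 1 - 2) / 4)) {0<..}"
      unfolding zeta_generator_eq[OF False]
      by (rule second_derivative_on_cmult[OF second_derivative_on_shifted_times_mean_powr])
    fix x :: real assume "x \<in> {0<..}"
    then have mean_powr: "((x + 1) / 2) powr (s - 1 - 1) = (x + 1) / 2 * ((x + 1) / 2) powr (s - 3)"
      using powr_mult_base[of "(x + 1) / 2" "s - 3"] by simp
    have "1 / (s - 1) * ((s - 1) * ((x + 1) / 2) powr (s - 1 - 1)
           + (s - 1) * (s - 1 - 1) * (x - 1) * ((x + 1) / 2) powr (s - 1 - 2) / 4)
        = 1 / (s - 1) * ((s - 1) * ((x + 1) / 2 * ((x + 1) / 2) powr (s - 3)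
           + (s - 2) * (x - 1) * ((x + 1) / 2) powr (s - 3) / 4))"
      unfolding mean_powr by (simp add: algebra_simps)
    also have "\<dots> = (x + 1) / 2 * ((x + 1) / 2) powr (s - 3)
        + (s - 2) * (x - 1) * ((x + 1) / 2) powr (s - 3) / 4"
      using False by simp
    also have "\<dots> = ((x + 1) / 2) powr (s - 3) * (s * x + 4 - s) / 4"
      by (simp add: field_simps)
    finally show "1 / (s - 1) * ((s - 1) * ((x + 1) / 2) powr (s - 1 - 1)
           + (s - 1) * (s - 1 - 1) * (x - 1) * ((x + 1) / 2) powr (s - 1 - 2) / 4)
        = zeta_curvature s x"
      unfolding zeta_curvature_def .
  qed
qed

section \<open>Comparing the curvatures\<close>

definition curvature_ratio :: "real \<Rightarrow> real \<Rightarrow> real \<Rightarrow> real" where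
  "curvature_ratio s t y = y powr (t + 1) * ((y + 1) / 2) powr (s - t - 1) * (s * y + 4 - s)"

lemma zeta_curvature_eq:
  assumes "0 < x"
  shows "zeta_curvature s x = curvature_ratio s t x * Omega_curvature t x"
proof -
  have ratio: "((x + 1) / (2 * x)) powr (t - 2) = ((x + 1) / 2) powr (t - 2) / x powr (t - 2)"
    using powr_divide[of "(x + 1) / 2" x "t - 2"] by simp
  have "x powr (t + 1) = x powr (t - 2) * x powr 3"
    by (simp add: powr_add[symmetric] add.commute)
  also have "x powr 3 = x^3"
    using assms by (simp add: powr_numeral)
  finally have x_powr: "x powr (t + 1) = x powr (t - 2) * x^3" .
  have mean_powr:
    "((x + 1) / 2) powr (s - t - 1) * ((x + 1) / 2) powr (t - 2) = ((x + 1) / 2) powr (s - 3)"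
    by (simp add: powr_add[symmetric])
  have cancel: "A * B * U * L * (V / A / (4 * B)) = U * V * L / 4" if "A \<noteq> 0" "B \<noteq> 0"
    for A B U V L :: real
    using that by (simp add: field_simps)
  show ?thesis
    unfolding zeta_curvature_def Omega_curvature_def curvature_ratio_def ratio x_powr
    using assms by (subst cancel) (simp_all add: mean_powr)
qed

lemma curvature_ratio_eq:
  fixes y :: real
  assumes "0 < y"
  shows "curvature_ratio s t y
       = (2 * y / (y + 1)) powr (t + 1) * ((y + 1) / 2) powr s * (s * y + 4 - s)"
proof -
  have "2 * y / (y + 1) = y / ((y + 1) / 2)"
    by simp
  then have "(2 * y / (y + 1)) powr (t + 1) = y powr (t + 1) / ((y + 1) / 2) powr (t + 1)"
    by (simp only: powr_divide)
  moreover have "((y + 1) / 2) powr (s - t - 1) = ((y + 1) / 2) powr s / ((y + 1) / 2) powr (t + 1)"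
    using powr_diff[of "(y + 1) / 2" s "t + 1"] by (simp add: algebra_simps)
  ultimately show ?thesis
    by (simp add: curvature_ratio_def)
qed

lemma curvature_ratio_mono:
  fixes y z :: real
  assumes "0 \<le> s" "s \<le> 4" "-1 \<le> t" "0 < y" "y \<le> z"
  shows "curvature_ratio s t y \<le> curvature_ratio s t z"
proof -
  have "(2 * y / (y + 1)) powr (t + 1) \<le> (2 * z / (z + 1)) powr (t + 1)"
    using assms by (intro powr_mono2) (simp_all add: divide_simps algebra_simps)
  moreover have "((y + 1) / 2) powr s \<le> ((z + 1) / 2) powr s"
    using assms by (intro powr_mono2) simp_all
  moreover have "s * y + 4 - s \<le> s * z + 4 - s"
    using assms by (simp add: mult_left_mono)
  moreover have "0 \<le> s * y + 4 - s"
    using assms mult_nonneg_nonneg[of s y] by linarith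
  ultimately show ?thesis
    using assms curvature_ratio_eq by (simp add: mult_mono)
qed

lemma zeta_curvature_between:
  assumes "0 \<le> s" "s \<le> 4" "-1 \<le> t" "0 < y" "y \<le> x" "x \<le> z"
  shows "curvature_ratio s t y * Omega_curvature t x \<le> zeta_curvature s x
       \<and> zeta_curvature s x \<le> curvature_ratio s t z * Omega_curvature t x"
proof -
  have "0 < x"
    using assms by simp
  then have "zeta_curvature s x = curvature_ratio s t x * Omega_curvature t x"
    and "0 \<le> Omega_curvature t x"
    by (rule zeta_curvature_eq, simp add: Omega_curvature_def)
  moreover have "curvature_ratio s t y \<le> curvature_ratio s t x"
    and "curvature_ratio s t x \<le> curvature_ratio s t z"
    using assms \<open>0 < x\<close> by (auto intro: curvature_ratio_mono)
  ultimately show ?thesis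
    by (simp add: mult_right_mono)
qed

theorem theorem4p1:
  fixes n :: nat and p q :: "nat \<Rightarrow> real" and r R s t :: real
  assumes "n \<ge> 2"
    and "p \<in> Gamma n" and "q \<in> Gamma n"
    and "0 < r" and "r \<le> R"
    and "\<forall>i<n. r \<le> p i / q i \<and> p i / q i \<le> R"
    and "0 \<le> s" and "s \<le> 4" and "t \<ge> -1"
  shows "r powr (t + 1) * ((r + 1) / 2) powr (s - t - 1) * (s * r + 4 - s) * Omega n t p q
           \<le> zeta n s p q
       \<and> zeta n s p q
           \<le> R powr (t + 1) * ((R + 1) / 2) powr (s - t - 1) * (s * R + 4 - s) * Omega n t p q"
proof -
  have p_pos: "\<And>i. i < n \<Longrightarrow> 0 < p i" and q_pos: "\<And>i. i < n \<Longrightarrow> 0 < q i"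
    using assms(2,3) by (auto simp: Gamma_def)
  have ratios: "\<And>i. i < n \<Longrightarrow> p i / q i \<in> {r..R}"
    using assms(6) by simp
  have "{r..R} \<subseteq> {0<..}"
    using assms(4) by auto
  then have Omega'': "second_derivative_on (Omega_generator t) (Omega_curvature t) {r..R}"
    and zeta'': "second_derivative_on (zeta_generator s) (zeta_curvature s) {r..R}"
    by (auto intro: second_derivative_on_subset second_derivative_on_Omega_generator
        second_derivative_on_zeta_generator)
  have curvature_bounds: "\<And>x. x \<in> {r..R} \<Longrightarrow>
      curvature_ratio s t r * Omega_curvature t x \<le> zeta_curvature s x
      \<and> zeta_curvature s x \<le> curvature_ratio s t R * Omega_curvature t x"
    using assms(4,7-9) by (intro zeta_curvature_between) auto
  have "csiszar_divergence n (\<lambda>x. curvature_ratio s t r * Omega_generator t x) p q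
      \<le> csiszar_divergence n (zeta_generator s) p q"
    using second_derivative_on_cmult[OF Omega''] zeta'' curvature_bounds assms(2,3) ratios
    by (intro csiszar_divergence_mono[where f'' = "\<lambda>x. curvature_ratio s t r * Omega_curvature t x"
        and g'' = "zeta_curvature s"]) auto
  moreover have "csiszar_divergence n (zeta_generator s) p q
      \<le> csiszar_divergence n (\<lambda>x. curvature_ratio s t R * Omega_generator t x) p q"
    using second_derivative_on_cmult[OF Omega''] zeta'' curvature_bounds assms(2,3) ratios
    by (intro csiszar_divergence_mono[where f'' = "zeta_curvature s"
        and g'' = "\<lambda>x. curvature_ratio s t R * Omega_curvature t x"]) auto
  ultimately show ?thesis
    using Omega_eq_csiszar_divergence[OF p_pos assms(3)] zeta_eq_csiszar_divergence[OF q_pos]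
    by (simp add: csiszar_divergence_cmult curvature_ratio_def)
qed

end
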